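(* Let $K$ be a $b$-complete idempotent semiring and $X$ a nonempty set. The kernel theorem holds for a functional $b$-semimodule $V\subset K(X)$ if and only if the identity operator $\mathrm{id}\colon V\to V$ is integral.
   Context: Idempotent semigroup: commutative, associative, idempotent $\oplus$ with order $x\preceq y$ iff $x\oplus y=y$; $b$-complete: every bounded above subset (incl. $\emptyset$) has a least upper bound. A homomorphism of $b$-complete semigroups is a $b$-homomorphism if it preserves least upper bounds of bounded above subsets. Idempotent semiring: idempotent commutative associative $\oplus$, associative $\odot$ bi-distributive, unit $\mathbf 1$, zero $\mathbf 0$; $b$-complete if $b$-complete and $k\odot(\oplus X)=\oplus(k\odot X)$, $(\oplus X)\odot k=\oplus(X\odot k)$ for bounded $X$. Idempotent semimodule over $K$: idempotent semigroup with associative bi-distributive $K$-action, $\mathbf 1\odot x=x$, $\mathbf 0\odot x=\mathbf 0$; $b$-complete if $b$-complete as semigroup and $(\oplus Q)\odot x=\oplus(Q\odot x)$, $k\odot(\oplus X)=\oplus(k\odot X)$ for bounded $Q,X$. Linear: preserves $\oplus$ and scalar multiplication; $b$-linear: moreover a $b$-homomorphism. $K(X)$: all maps $X\to K$, pointwise operations; a functional $b$-semimodule on $X$ is a subset of $K(X)$ closed under pointwise $\oplus$ and scalar multiplication, which is a $b$-complete semimodule and whose embedding into $K(X)$ is a $b$-homomorphism. A mapping $A\colon V\to W$ is integral if there is $k\colon X\to W$ such that $\{f(x)\odot k(x)\mid x\in X\}$ is bounded for all $f\in V$ and $Af=\sup_{x\in X}(f(x)\odot k(x))$. The kernel theorem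 holds for $V$ if every $b$-linear mapping from $V$ to an arbitrary $b$-complete semimodule over $K$ is integral. *)

theory Defs
  imports Main
begin

text \<open>Idempotent semiring: commutative associative idempotent addition (\<oplus> = +) with zero,
  associative multiplication (\<odot> = * ) with unit, both distributive laws, 0 absorbing.
  (No assumption 0 \<noteq> 1 is made.)\<close>
class idem_semiring = semiring_0 + monoid_mult +
  assumes add_idem: "a + a = a"

definition ile :: "('a \<Rightarrow> 'a \<Rightarrow> 'a) \<Rightarrow> 'a \<Rightarrow> 'a \<Rightarrow> bool" where
  "ile add x y \<longleftrightarrow> add x y = y"

definition is_lub_in :: "'a set \<Rightarrow> ('a \<Rightarrow> 'a \<Rightarrow> 'a) \<Rightarrow> 'a set \<Rightarrow> 'a \<Rightarrow> bool" where
  "is_lub_in W add S u \<longleftrightarrow> u \<in> W \<and> (\<forall>s\<in>S. ile add s u) \<and>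
     (\<forall>v\<in>W. (\<forall>s\<in>S. ile add s v) \<longrightarrow> ile add u v)"

definition bounded_in :: "'a set \<Rightarrow> ('a \<Rightarrow> 'a \<Rightarrow> 'a) \<Rightarrow> 'a set \<Rightarrow> bool" where
  "bounded_in W add S \<longleftrightarrow> (\<exists>u\<in>W. \<forall>s\<in>S. ile add s u)"

definition bsup_in :: "'a set \<Rightarrow> ('a \<Rightarrow> 'a \<Rightarrow> 'a) \<Rightarrow> 'a set \<Rightarrow> 'a" where
  "bsup_in W add S = (THE u. is_lub_in W add S u)"

definition b_complete_in :: "'a set \<Rightarrow> ('a \<Rightarrow> 'a \<Rightarrow> 'a) \<Rightarrow> bool" where
  "b_complete_in W add \<longleftrightarrow> (\<forall>S\<subseteq>W. bounded_in W add S \<longrightarrow> (\<exists>u. is_lub_in W add S u))"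

definition b_complete_semiring :: "'k::idem_semiring itself \<Rightarrow> bool" where
  "b_complete_semiring TYPE('k) \<longleftrightarrow>
     b_complete_in (UNIV::'k set) (+) \<and>
     (\<forall>(k::'k) X. bounded_in UNIV (+) X \<longrightarrow>
        k * bsup_in UNIV (+) X = bsup_in UNIV (+) ((\<lambda>x. k * x) ` X) \<and>
        bsup_in UNIV (+) X * k = bsup_in UNIV (+) ((\<lambda>x. x * k) ` X))"

definition semimodule_on ::
  "'w set \<Rightarrow> ('w \<Rightarrow> 'w \<Rightarrow> 'w) \<Rightarrow> ('k::idem_semiring \<Rightarrow> 'w \<Rightarrow> 'w) \<Rightarrow> 'w \<Rightarrow> bool" where
  "semimodule_on W add smul z \<longleftrightarrow>
     z \<in> W \<and>
     (\<forall>x\<in>W. \<forall>y\<in>W. add x y \<in> W) \<and>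
     (\<forall>k. \<forall>x\<in>W. smul k x \<in> W) \<and>
     (\<forall>x\<in>W. \<forall>y\<in>W. add x y = add y x) \<and>
     (\<forall>x\<in>W. \<forall>y\<in>W. \<forall>v\<in>W. add (add x y) v = add x (add y v)) \<and>
     (\<forall>x\<in>W. add x x = x) \<and>
     (\<forall>k l. \<forall>x\<in>W. smul (k * l) x = smul k (smul l x)) \<and>
     (\<forall>k. \<forall>x\<in>W. \<forall>y\<in>W. smul k (add x y) = add (smul k x) (smul k y)) \<and>
     (\<forall>k l. \<forall>x\<in>W. smul (k + l) x = add (smul k x) (smul l x)) \<and>
     (\<forall>x\<in>W. smul 1 x = x) \<and>
     (\<forall>x\<in>W. smul 0 x = z)"

definition b_complete_semimodule ::
  "'w set \<Rightarrow> ('w \<Rightarrow> 'w \<Rightarrow> 'w) \<Rightarrow> ('k::idem_semiring \<Rightarrow> 'w \<Rightarrow> 'w) \<Rightarrow> 'w \<Rightarrow> bool" where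
  "b_complete_semimodule W add smul z \<longleftrightarrow>
     semimodule_on W add smul z \<and>
     b_complete_in W add \<and>
     (\<forall>Q. bounded_in (UNIV::'k set) (+) Q \<longrightarrow>
        (\<forall>x\<in>W. smul (bsup_in UNIV (+) Q) x = bsup_in W add ((\<lambda>k. smul k x) ` Q))) \<and>
     (\<forall>k. \<forall>S\<subseteq>W. bounded_in W add S \<longrightarrow>
        smul k (bsup_in W add S) = bsup_in W add (smul k ` S))"

definition b_linear ::
  "'v set \<Rightarrow> ('v \<Rightarrow> 'v \<Rightarrow> 'v) \<Rightarrow> ('k::idem_semiring \<Rightarrow> 'v \<Rightarrow> 'v) \<Rightarrow>
   'w set \<Rightarrow> ('w \<Rightarrow> 'w \<Rightarrow> 'w) \<Rightarrow> ('k \<Rightarrow> 'w \<Rightarrow> 'w) \<Rightarrow> ('v \<Rightarrow> 'w) \<Rightarrow> bool" where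
  "b_linear V addV smulV W addW smulW A \<longleftrightarrow>
     (\<forall>x\<in>V. A x \<in> W) \<and>
     (\<forall>x\<in>V. \<forall>y\<in>V. A (addV x y) = addW (A x) (A y)) \<and>
     (\<forall>k. \<forall>x\<in>V. A (smulV k x) = smulW k (A x)) \<and>
     (\<forall>S\<subseteq>V. bounded_in V addV S \<longrightarrow> A (bsup_in V addV S) = bsup_in W addW (A ` S))"

definition fadd :: "('x \<Rightarrow> 'k::idem_semiring) \<Rightarrow> ('x \<Rightarrow> 'k) \<Rightarrow> 'x \<Rightarrow> 'k" where
  "fadd f g = (\<lambda>x. f x + g x)"

definition fsmul :: "'k::idem_semiring \<Rightarrow> ('x \<Rightarrow> 'k) \<Rightarrow> 'x \<Rightarrow> 'k" where
  "fsmul k f = (\<lambda>x. k * f x)"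

definition fzero :: "'x \<Rightarrow> 'k::idem_semiring" where
  "fzero = (\<lambda>x. 0)"

text \<open>Functional b-semimodule on X (X = UNIV of type 'x): subset of K(X) closed under pointwise
  operations, b-complete as a semimodule, whose embedding into K(X) is a b-homomorphism.\<close>
definition functional_b_semimodule :: "('x \<Rightarrow> 'k::idem_semiring) set \<Rightarrow> bool" where
  "functional_b_semimodule V \<longleftrightarrow>
     (\<forall>f\<in>V. \<forall>g\<in>V. fadd f g \<in> V) \<and>
     (\<forall>k. \<forall>f\<in>V. fsmul k f \<in> V) \<and>
     b_complete_semimodule V fadd fsmul fzero \<and>
     (\<forall>S\<subseteq>V. bounded_in V fadd S \<longrightarrow>
        bounded_in UNIV fadd S \<and> bsup_in V fadd S = bsup_in UNIV fadd S)"

definition integral_map ::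
  "('x \<Rightarrow> 'k::idem_semiring) set \<Rightarrow> 'w set \<Rightarrow> ('w \<Rightarrow> 'w \<Rightarrow> 'w) \<Rightarrow> ('k \<Rightarrow> 'w \<Rightarrow> 'w)
   \<Rightarrow> (('x \<Rightarrow> 'k) \<Rightarrow> 'w) \<Rightarrow> bool" where
  "integral_map V W addW smulW A \<longleftrightarrow>
     (\<exists>kk :: 'x \<Rightarrow> 'w. (\<forall>x. kk x \<in> W) \<and>
        (\<forall>f\<in>V. bounded_in W addW (range (\<lambda>x. smulW (f x) (kk x))) \<and>
               A f = bsup_in W addW (range (\<lambda>x. smulW (f x) (kk x)))))"

text \<open>Kernel theorem for V, with target semimodules whose carriers lie in the type 'w.\<close>
definition kernel_theorem :: "'w itself \<Rightarrow> ('x \<Rightarrow> 'k::idem_semiring) set \<Rightarrow> bool" where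
  "kernel_theorem TYPE('w) V \<longleftrightarrow>
     (\<forall>(W::'w set) addW (smulW :: 'k \<Rightarrow> 'w \<Rightarrow> 'w) zW A.
        b_complete_semimodule W addW smulW zW \<longrightarrow>
        b_linear V fadd fsmul W addW smulW A \<longrightarrow>
        integral_map V W addW smulW A)"

end

theory Submission
  imports Defs
begin

(* Suppose the identity of V is integral with kernel
   kk : X \<rightarrow> V, i.e. every f \<in> V is the least upper bound in V of the bounded family
   f(x) \<odot> kk(x).  A b-linear map A : V \<rightarrow> W preserves scalar multiples, the order and
   least upper bounds of bounded subsets, so A f is the least upper bound in W of
   f(x) \<odot> A(kk(x)); hence A is integral with kernel A \<circ> kk.  Conversely, the identity of V is b-linear and V is itself a
   b-complete semimodule, so the kernel theorem applied with target V makes the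
   identity integral. *)

lemma lub_bsup:
  assumes comm: "\<forall>x\<in>W. \<forall>y\<in>W. add x y = add y x"
    and bc: "b_complete_in W add" and sub: "S \<subseteq> W" and bd: "bounded_in W add S"
  shows "is_lub_in W add S (bsup_in W add S)"
proof -
  obtain u where u: "is_lub_in W add S u"
    using bc sub bd unfolding b_complete_in_def by blast
  have unique: "v = u" if "is_lub_in W add S v" for v
  proof -
    have "ile add v u" "ile add u v" "u \<in> W" "v \<in> W"
      using that u unfolding is_lub_in_def by auto
    then show ?thesis using comm unfolding ile_def by metis
  qed
  show ?thesis unfolding bsup_in_def using u unique by (metis theI)
qed

lemma b_linear_mono:
  assumes "b_linear V addV smulV W addW smulW A"
    and "s \<in> V" "f \<in> V" "ile addV s f"
  shows "ile addW (A s) (A f)"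
  using assms unfolding b_linear_def ile_def by metis

lemma b_linear_id: "b_linear V add smul V add smul (\<lambda>f. f)"
  unfolding b_linear_def by auto

lemma integral_map_transfer:
  fixes V :: "('x \<Rightarrow> 'k::idem_semiring) set"
  assumes V: "functional_b_semimodule V"
    and id_int: "integral_map V V fadd fsmul (\<lambda>f. f)"
    and lin: "b_linear V fadd fsmul W addW smulW A"
  shows "integral_map V W addW smulW A"
proof -
  have closed_smul: "\<forall>k. \<forall>f\<in>V. fsmul k f \<in> V"
    and bcs: "b_complete_semimodule V fadd fsmul fzero"
    using V unfolding functional_b_semimodule_def by auto
  then have bc: "b_complete_in V fadd" and comm: "\<forall>x\<in>V. \<forall>y\<in>V. fadd x y = fadd y x"
    unfolding b_complete_semimodule_def semimodule_on_def by auto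
  obtain kk where kkV: "\<forall>x. kk x \<in> V"
    and kk: "\<forall>f\<in>V. bounded_in V fadd (range (\<lambda>x. fsmul (f x) (kk x))) \<and>
                   f = bsup_in V fadd (range (\<lambda>x. fsmul (f x) (kk x)))"
    using id_int unfolding integral_map_def by blast
  have AW: "\<forall>x\<in>V. A x \<in> W"
    and Asmul: "\<forall>k. \<forall>x\<in>V. A (fsmul k x) = smulW k (A x)"
    and Asup: "\<forall>S\<subseteq>V. bounded_in V fadd S \<longrightarrow> A (bsup_in V fadd S) = bsup_in W addW (A ` S)"
    using lin unfolding b_linear_def by auto
  show ?thesis
    unfolding integral_map_def
  proof (intro exI[of _ "\<lambda>x. A (kk x)"] conjI allI ballI)
    fix x show "A (kk x) \<in> W" using AW kkV by auto
  next
    fix f assume fV: "f \<in> V"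
    let ?S = "range (\<lambda>x. fsmul (f x) (kk x))"
    have SV: "?S \<subseteq> V" using closed_smul kkV by auto
    have bd: "bounded_in V fadd ?S" and f_sup: "f = bsup_in V fadd ?S" using kk fV by auto
    have image: "A ` ?S = range (\<lambda>x. smulW (f x) (A (kk x)))"
      using Asmul kkV by (auto simp: image_iff)
    have "\<forall>s\<in>?S. ile fadd s f"
      using lub_bsup[OF comm bc SV bd] f_sup unfolding is_lub_in_def by simp
    then have "\<forall>s\<in>?S. ile addW (A s) (A f)"
      using b_linear_mono[OF lin] SV fV by blast
    then show "bounded_in W addW (range (\<lambda>x. smulW (f x) (A (kk x))))"
      unfolding bounded_in_def image[symmetric] using AW fV by blast
    show "A f = bsup_in W addW (range (\<lambda>x. smulW (f x) (A (kk x))))"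
      using Asup SV bd f_sup image by metis
  qed
qed

theorem corollary7p30:
  fixes V :: "('x \<Rightarrow> 'k::idem_semiring) set"
  assumes "b_complete_semiring TYPE('k)"
    and "functional_b_semimodule V"
  shows "(integral_map V V fadd fsmul (\<lambda>f. f) \<longrightarrow> kernel_theorem TYPE('w) V) \<and>
         (kernel_theorem TYPE('x \<Rightarrow> 'k) V \<longrightarrow> integral_map V V fadd fsmul (\<lambda>f. f))"
proof (intro conjI impI)
  assume "integral_map V V fadd fsmul (\<lambda>f. f)"
  then show "kernel_theorem TYPE('w) V"
    using integral_map_transfer[OF assms(2)] unfolding kernel_theorem_def by blast
next
  assume "kernel_theorem TYPE('x \<Rightarrow> 'k) V"
  moreover have "b_complete_semimodule V fadd fsmul fzero"
    using assms(2) unfolding functional_b_semimodule_def by auto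
  ultimately show "integral_map V V fadd fsmul (\<lambda>f. f)"
    using b_linear_id unfolding kernel_theorem_def by blast
qed

end
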